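(* Let $P\subset\mathbb R^d$ be a $d$-polytope, $d\geq 3$, $S$ a simplex facet of $P$ in bounded position, and $\mathcal F,\mathcal N\subseteq\operatorname{adj}(S)$ disjoint with $\mathcal F$ nonsimple. Assume every vertex of $P$ lies in at least one facet of $P$ not in $\mathcal F\cup\mathcal N\cup\{S\}$. Then for $v\in V_S(\mathcal F,\mathcal N;P)$, the polytope $Q=\operatorname{conv}(P\cup\{v\})$ satisfies $f_0(Q)=f_0(P)+1$.
   Context: $f_0$ denotes the number of vertices. For a facet $F$ of $P$ let $H_F=\{x:\langle x,a_F\rangle=\ell_F\}$ be its affine hull, oriented so that $P\subseteq\{x:\langle x,a_F\rangle\geq\ell_F\}$; $H_F^+$, $H_F^-$ are the open sides $\{>\}$, $\{<\}$. Two facets are adjacent if they share a ridge; $\operatorname{adj}(S)$ is the set of facets adjacent to $S$. A simplex facet is a facet combinatorially equivalent to a $(d-1)$-simplex. $S$ is in bounded position if for every set of $d$ facets in $\operatorname{adj}(S)$ their hyperplanes meet in a point of $H_S^-$. $\mathcal F\subseteq\operatorname{adj}(S)$ is nonsimple if there is no pair of adjacent facets $G,G'\in\mathcal F$ having a common $(d-3)$-face with $S$. $V_S(\mathcal F,\mathcal N;P)$ is the set of points lying in $H_F^-$ for $F\in\mathcal N\cup\{S\}$, in $H_F$ for $F\in\mathcal F$, and in $H_F^+$ for all other facets $F$ of $P$. *)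

theory Defs
  imports "HOL-Analysis.Analysis"
begin

definition vertices :: "'a::euclidean_space set \<Rightarrow> 'a set" where
  "vertices P = {v. v extreme_point_of P}"

definition f0 :: "'a::euclidean_space set \<Rightarrow> nat" where
  "f0 P = card (vertices P)"

definition full_polytope :: "'a::euclidean_space set \<Rightarrow> bool" where
  "full_polytope P \<longleftrightarrow> polytope P \<and> aff_dim P = int DIM('a)"

definition hyp :: "'a::euclidean_space set \<Rightarrow> 'a set" where
  "hyp F = affine hull F"

definition plus_side :: "'a::euclidean_space set \<Rightarrow> 'a set \<Rightarrow> 'a set" where
  "plus_side P F = {x. \<exists>a l. a \<noteq> 0 \<and> affine hull F = {y. inner y a = l}
       \<and> P \<subseteq> {y. inner y a \<ge> l} \<and> inner x a > l}"

definition minus_side :: "'a::euclidean_space set \<Rightarrow> 'a set \<Rightarrow> 'a set" where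
  "minus_side P F = {x. \<exists>a l. a \<noteq> 0 \<and> affine hull F = {y. inner y a = l}
       \<and> P \<subseteq> {y. inner y a \<ge> l} \<and> inner x a < l}"

definition adjacent :: "'a::euclidean_space set \<Rightarrow> 'a set \<Rightarrow> 'a set \<Rightarrow> bool" where
  "adjacent P F G \<longleftrightarrow> F facet_of P \<and> G facet_of P \<and> F \<noteq> G \<and>
     (\<exists>R. R face_of P \<and> aff_dim R = aff_dim P - 2 \<and> R \<subseteq> F \<inter> G)"

definition adj :: "'a::euclidean_space set \<Rightarrow> 'a set \<Rightarrow> 'a set set" where
  "adj P S = {G. adjacent P S G}"

definition comb_equiv :: "'a::euclidean_space set \<Rightarrow> 'b::euclidean_space set \<Rightarrow> bool" where
  "comb_equiv P Q \<longleftrightarrow> (\<exists>f. bij_betw f {F. F face_of P} {G. G face_of Q} \<and>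
     (\<forall>F1 F2. F1 face_of P \<longrightarrow> F2 face_of P \<longrightarrow> (F1 \<subseteq> F2 \<longleftrightarrow> f F1 \<subseteq> f F2)))"

definition simplex_facet :: "'a::euclidean_space set \<Rightarrow> 'a set \<Rightarrow> bool" where
  "simplex_facet P S \<longleftrightarrow> S facet_of P \<and>
     (\<exists>T::'a set. (int DIM('a) - 1) simplex T \<and> comb_equiv S T)"

definition bounded_position :: "'a::euclidean_space set \<Rightarrow> 'a set \<Rightarrow> bool" where
  "bounded_position P S \<longleftrightarrow> (\<forall>\<G>. \<G> \<subseteq> adj P S \<and> card \<G> = DIM('a) \<longrightarrow>
     (\<exists>p. (\<Inter>G\<in>\<G>. hyp G) = {p} \<and> p \<in> minus_side P S))"

definition nonsimple :: "'a::euclidean_space set \<Rightarrow> 'a set \<Rightarrow> 'a set set \<Rightarrow> bool" where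
  "nonsimple P S \<F> \<longleftrightarrow> \<not> (\<exists>G\<in>\<F>. \<exists>G'\<in>\<F>. adjacent P G G' \<and>
     (\<exists>R. R face_of P \<and> aff_dim R = aff_dim P - 3 \<and> R \<subseteq> G \<inter> G' \<inter> S))"

definition VS :: "'a::euclidean_space set \<Rightarrow> 'a set \<Rightarrow> 'a set set \<Rightarrow> 'a set set \<Rightarrow> 'a set" where
  "VS P S \<F> \<N> = {x. (\<forall>F\<in>\<N> \<union> {S}. x \<in> minus_side P F) \<and>
     (\<forall>F\<in>\<F>. x \<in> hyp F) \<and>
     (\<forall>F. F facet_of P \<and> F \<notin> \<F> \<union> \<N> \<union> {S} \<longrightarrow> x \<in> plus_side P F)}"

end

theory Submission
  imports Defs
begin

text \<open>Since \<open>v\<close>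
  lies beyond \<open>S\<close>, it is not in \<open>P\<close>, so it becomes a new vertex of \<open>Q\<close>, and the
  only other candidates for vertices of \<open>Q\<close> are the vertices of \<open>P\<close>. Each vertex
  \<open>w\<close> of \<open>P\<close> lies in a facet \<open>F\<close> with \<open>v \<in> H\<^sub>F\<^sup>+\<close>; then \<open>H\<^sub>F\<close> still supports
  \<open>Q\<close>, and it cuts out the same face from \<open>Q\<close> as from \<open>P\<close>, so \<open>w\<close> stays a vertex.\<close>

lemma convex_hull_insert_Int_supporting_hyperplane:
  fixes P :: "'a::real_inner set"
  assumes P: "\<And>x. x \<in> P \<Longrightarrow> a \<bullet> x \<ge> l" and v: "a \<bullet> v > l"
  shows "convex hull (insert v P) \<inter> {x. a \<bullet> x = l} = convex hull P \<inter> {x. a \<bullet> x = l}"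
proof (cases "P = {}")
  case True
  then show ?thesis using v by auto
next
  case False
  have hullP: "a \<bullet> x \<ge> l" if "x \<in> convex hull P" for x
    using that hull_minimal[of P "{x. a \<bullet> x \<ge> l}" convex] P convex_halfspace_ge[of l a]
    by blast
  have "x \<in> convex hull P" if x: "x \<in> convex hull (insert v P)" "a \<bullet> x = l" for x
  proof -
    obtain b u where b: "b \<in> convex hull P" and u: "0 \<le> u" "u \<le> 1"
      and x_eq: "x = (1 - u) *\<^sub>R v + u *\<^sub>R b"
      using x(1) False unfolding convex_hull_insert_alt by auto
    have "(1 - u) * (a \<bullet> v - l) + u * (a \<bullet> b - l) = a \<bullet> x - l"
      by (simp add: x_eq inner_add_right algebra_simps)
    also have "\<dots> = 0" using x(2) by simp
    finally have "(1 - u) * (a \<bullet> v - l) + u * (a \<bullet> b - l) = 0" .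
    moreover have "(1 - u) * (a \<bullet> v - l) \<ge> 0" "u * (a \<bullet> b - l) \<ge> 0"
      using u v hullP[OF b] by simp_all
    ultimately have "(1 - u) * (a \<bullet> v - l) = 0"
      by (simp add: add_nonneg_eq_0_iff)
    then have "u = 1" using v by simp
    then show ?thesis using x_eq b by simp
  qed
  then show ?thesis using hull_mono[of P "insert v P" convex] by auto
qed

lemma extreme_point_of_convex_hull_insert_supporting_hyperplane:
  fixes P :: "'a::real_inner set"
  assumes "convex P" and P: "\<And>x. x \<in> P \<Longrightarrow> a \<bullet> x \<ge> l" and v: "a \<bullet> v > l"
    and w: "w extreme_point_of P" "a \<bullet> w = l"
  shows "w extreme_point_of convex hull (insert v P)"
proof -
  let ?Q = "convex hull (insert v P)" and ?H = "{x. a \<bullet> x = l}"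
  have "a \<bullet> x \<ge> l" if "x \<in> ?Q" for x
    using that hull_minimal[of "insert v P" "{x. a \<bullet> x \<ge> l}" convex] P v
      convex_halfspace_ge[of l a]
    by auto
  then have face_Q: "?Q \<inter> ?H face_of ?Q"
    by (intro face_of_Int_supporting_hyperplane_ge) auto
  have face_P: "P \<inter> ?H face_of P"
    using \<open>convex P\<close> P by (intro face_of_Int_supporting_hyperplane_ge) auto
  have "w extreme_point_of P \<inter> ?H"
    using w extreme_point_of_face[OF face_P] extreme_point_of_def by auto
  then have "w extreme_point_of ?Q \<inter> ?H"
    using convex_hull_insert_Int_supporting_hyperplane[OF P v] \<open>convex P\<close>
    by (simp add: hull_same)
  then show ?thesis using extreme_point_of_face[OF face_Q] by blast
qed

lemma notin_if_minus_side: "x \<in> minus_side P F \<Longrightarrow> x \<notin> P"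
  unfolding minus_side_def by force

lemma extreme_point_of_convex_hull_insert_plus_side:
  assumes "convex P" "v \<in> plus_side P F" "w \<in> F" "w extreme_point_of P"
  shows "w extreme_point_of convex hull (insert v P)"
proof -
  obtain a l where F: "affine hull F = {y. y \<bullet> a = l}"
    and P: "P \<subseteq> {y. y \<bullet> a \<ge> l}" and v: "v \<bullet> a > l"
    using assms(2) unfolding plus_side_def by blast
  have "w \<bullet> a = l" using F \<open>w \<in> F\<close> hull_subset[of F affine] by auto
  then show ?thesis
    using assms(1,4) P v
    by (intro extreme_point_of_convex_hull_insert_supporting_hyperplane[where a = a and l = l])
      (auto simp: inner_commute)
qed

lemma finite_vertices: "polytope P \<Longrightarrow> finite (vertices P)"
  unfolding vertices_def by (simp add: finite_polyhedron_extreme_points polytope_imp_polyhedron)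

lemma convex_hull_vertices: "polytope P \<Longrightarrow> convex hull vertices P = P"
  unfolding vertices_def
  by (metis Krein_Milman_Minkowski polytope_imp_compact polytope_imp_convex)

lemma convex_hull_insert_vertices:
  "polytope P \<Longrightarrow> convex hull (insert v P) = convex hull (insert v (vertices P))"
  by (metis convex_hull_vertices hull_insert)

lemma vertices_convex_hull_insert_subset:
  "polytope P \<Longrightarrow> vertices (convex hull (insert v P)) \<subseteq> insert v (vertices P)"
  using extreme_point_of_convex_hull[of _ "insert v (vertices P)"]
  by (auto simp: convex_hull_insert_vertices vertices_def)

lemma vertex_convex_hull_insert:
  assumes "polytope P" "v \<notin> P"
  shows "v \<in> vertices (convex hull (insert v P))"
proof -
  have "v \<notin> convex hull vertices P" using assms by (simp add: convex_hull_vertices)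
  then have "v extreme_point_of convex hull (insert v (vertices P))"
    using extreme_point_of_convex_hull_insert finite_vertices[OF assms(1)] by blast
  then show ?thesis using assms(1) by (simp add: convex_hull_insert_vertices vertices_def)
qed

lemma f0_convex_hull_insert:
  fixes P :: "'a::euclidean_space set"
  assumes "polytope P" "v \<notin> P" "vertices P \<subseteq> vertices (convex hull (insert v P))"
  shows "f0 (convex hull (insert v P)) = f0 P + 1"
proof -
  have "vertices (convex hull (insert v P)) = insert v (vertices P)"
    using assms vertices_convex_hull_insert_subset vertex_convex_hull_insert by blast
  moreover have "v \<notin> vertices P"
    using assms(2) unfolding vertices_def extreme_point_of_def by blast
  ultimately show ?thesis using finite_vertices[OF assms(1)] unfolding f0_def by simp
qed

theorem corollary2p12:
  fixes P :: "'a::euclidean_space set" and S :: "'a set"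
    and \<F> \<N> :: "'a set set" and v :: 'a
  assumes "full_polytope P"
    and "DIM('a) \<ge> 3"
    and "simplex_facet P S"
    and "bounded_position P S"
    and "\<F> \<subseteq> adj P S" and "\<N> \<subseteq> adj P S" and "\<F> \<inter> \<N> = {}"
    and "nonsimple P S \<F>"
    and "\<forall>w\<in>vertices P. \<exists>F. F facet_of P \<and> F \<notin> \<F> \<union> \<N> \<union> {S} \<and> w \<in> F"
    and "v \<in> VS P S \<F> \<N>"
  shows "f0 (convex hull (insert v P)) = f0 P + 1"
proof (rule f0_convex_hull_insert)
  show P: "polytope P" using assms(1) unfolding full_polytope_def by blast
  show "v \<notin> P"
    using assms(10) notin_if_minus_side unfolding VS_def by blast
  show "vertices P \<subseteq> vertices (convex hull (insert v P))"
  proof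
    fix w assume w: "w \<in> vertices P"
    then obtain F where F: "F facet_of P" "F \<notin> \<F> \<union> \<N> \<union> {S}" "w \<in> F"
      using assms(9) by blast
    then have "v \<in> plus_side P F" using assms(10) unfolding VS_def by blast
    then show "w \<in> vertices (convex hull (insert v P))"
      using extreme_point_of_convex_hull_insert_plus_side polytope_imp_convex[OF P] F(3) w
      unfolding vertices_def by blast
  qed
qed

end
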